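(* The certifier's revenue-maximization problem in the certification market is equivalent to an instance of the non-linear pricing problem with buyer types $\psi$ distributed according to $G$ and valuation $v(q;\psi)=f(q;\phi(\psi))-g(q;\psi)$, where $\phi(\psi)$ satisfies $F(\phi(\psi))=G(\psi)$. Specifically: $v$ is concave in $q$, satisfies $v(0;\psi)=0$, and satisfies the strict single-crossing condition; and for every menu $M=\{(q_i,t_i)\}$, the certificate chosen by each producer type $\psi$ in equilibrium coincides with the quantity chosen by buyer type $\psi$ facing the menu $M$ (interpreting thresholds as quantities and transfers as prices), so the certifier's revenue (net of verification cost $c$ per non-trivial certificate) from $M$ equals the seller's revenue from $M$ in the pricing problem.
   Context: Certification market: producers with types $\psi$ (atomless distribution $G$, compact support), consumers with types $\phi$ (atomless distribution $F$, compact support), quality $q\in[0,1]$; cost $g(q;\psi)$ weakly convex non-decreasing in $q$, $g(0;\psi)=0$; value $f(q;\phi)$ weakly concave non-decreasing in $q$, $f(0;\phi)=0$, $0\le f\le 1$; strict single-crossing: for $\phi_1<\phi_2$, $q_1<q_2$: $f(q_2;\phi_2)-f(q_1;\phi_2)>f(q_2;\phi_1)-f(q_1;\phi_1)$, and for $\psi_1<\psi_2$, $q_1<q_2$: $g(q_2;\psi_2)-g(q_1;\psi_2)<g(q_2;\psi_1)-g(q_1;\psi_1)$. The certifier offers a menu $M=\{(q_i,t_i)\}$ of threshold certificates $[q_i,1]$ with transfers $t_i$ (always including $(0,0)$), incurs verification cost $c\ge0$ for each non-trivial certificate ($q_i>0$) issued, and each producer choosing threshold $q_i$ produces at quality $q_i$;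 producers choose certificates in equilibrium and then trade with consumers in a competitive (Walrasian) market equilibrium. Certifier revenue = expected transfers minus $c$ times the measure of producers buying non-trivial certificates. Non-linear pricing problem: a seller faces a buyer of type $\theta$ drawn from a known prior; the buyer's value for quantity $q\in[0,1]$ is $v(q;\theta)$, concave (not necessarily monotone) in $q$ with $v(0;\theta)=0$, satisfying strict single-crossing: for $\theta_1<\theta_2$, $q_1<q_2$, $v(q_2;\theta_2)-v(q_1;\theta_2)>v(q_2;\theta_1)-v(q_1;\theta_1)$. The seller commits to a menu $M$ of (quantity, price) pairs including $(0,0)$; the buyer selects a pair maximizing $v(q;\theta)-p$; the seller pays a constant cost $c$ for any non-zero quantity sold. $\operatorname{Rev}(M)$ denotes the expected price collected minus $c$ times the probability of selling a non-zero quantity. *)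

theory Defs
  imports "HOL-Probability.Probability"
begin

definition type_distribution :: "real measure \<Rightarrow> bool" where
  "type_distribution D \<longleftrightarrow> prob_space D \<and> sets D = sets borel
     \<and> (\<forall>x. measure D {x} = 0) \<and> (\<exists>K. compact K \<and> measure D K = 1)"

text \<open>A menu: finite set of (threshold/quantity, transfer/price) pairs, thresholds in [0,1],
always containing the trivial option (0,0).\<close>

definition menu :: "(real \<times> real) set \<Rightarrow> bool" where
  "menu M \<longleftrightarrow> finite M \<and> (0, 0) \<in> M \<and> (\<forall>m\<in>M. 0 \<le> fst m \<and> fst m \<le> 1)"

definition strict_single_crossing :: "(real \<Rightarrow> real \<Rightarrow> real) \<Rightarrow> bool" where
  "strict_single_crossing w \<longleftrightarrow>
     (\<forall>\<theta>1 \<theta>2 q1 q2. \<theta>1 < \<theta>2 \<longrightarrow> 0 \<le> q1 \<longrightarrow> q1 < q2 \<longrightarrow> q2 \<le> 1 \<longrightarrow>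
        w q2 \<theta>2 - w q1 \<theta>2 > w q2 \<theta>1 - w q1 \<theta>1)"

definition buyer_best :: "(real \<Rightarrow> real \<Rightarrow> real) \<Rightarrow> (real \<times> real) set \<Rightarrow> real \<Rightarrow> real \<times> real \<Rightarrow> bool" where
  "buyer_best v M \<theta> m \<longleftrightarrow> m \<in> M \<and> (\<forall>m'\<in>M. v (fst m') \<theta> - snd m' \<le> v (fst m) \<theta> - snd m)"

definition seller_revenue :: "real measure \<Rightarrow> real \<Rightarrow> (real \<Rightarrow> real \<times> real) \<Rightarrow> real" where
  "seller_revenue D c s = (\<integral>\<theta>. snd (s \<theta>) \<partial>D) - c * measure D {\<theta>. fst (s \<theta>) \<noteq> 0}"

definition consumer_util :: "(real \<Rightarrow> real \<Rightarrow> real) \<Rightarrow> (real \<Rightarrow> real) \<Rightarrow> real \<Rightarrow> real option \<Rightarrow> real" where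
  "consumer_util f p \<phi> b = (case b of None \<Rightarrow> 0 | Some q \<Rightarrow> f q \<phi> - p q)"

text \<open>Equilibrium of the certification market under menu M:
  \<sigma> \<psi>  = certificate chosen by producer type \<psi> (producer then produces at quality fst (\<sigma> \<psi>));
  \<beta> \<phi>  = purchase of consumer type \<phi>;
  p q  = competitive (Walrasian) price of goods of quality q.\<close>

definition cert_equilibrium ::
  "real measure \<Rightarrow> real measure \<Rightarrow> (real \<Rightarrow> real \<Rightarrow> real) \<Rightarrow> (real \<Rightarrow> real \<Rightarrow> real)
   \<Rightarrow> (real \<times> real) set \<Rightarrow> (real \<Rightarrow> real \<times> real) \<Rightarrow> (real \<Rightarrow> real option) \<Rightarrow> (real \<Rightarrow> real) \<Rightarrow> bool" where
  "cert_equilibrium F G f g M \<sigma> \<beta> p \<longleftrightarrow>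
     (\<forall>\<psi>. \<sigma> \<psi> \<in> M)
   \<and> (\<forall>\<psi>. \<forall>m\<in>M. p (fst m) - g (fst m) \<psi> - snd m \<le> p (fst (\<sigma> \<psi>)) - g (fst (\<sigma> \<psi>)) \<psi> - snd (\<sigma> \<psi>))
   \<and> (\<forall>\<phi>. \<beta> \<phi> \<in> insert None (Some ` fst ` M))
   \<and> (\<forall>\<phi>. 0 \<le> consumer_util f p \<phi> (\<beta> \<phi>)
           \<and> (\<forall>m\<in>M. f (fst m) \<phi> - p (fst m) \<le> consumer_util f p \<phi> (\<beta> \<phi>)))
   \<and> p 0 = 0
   \<and> (\<forall>m\<in>M. {\<psi>. \<sigma> \<psi> = m} \<in> sets G)
   \<and> (\<forall>q. {\<phi>. \<beta> \<phi> = Some q} \<in> sets F)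
   \<and> (\<forall>q\<in>fst ` M. 0 < q \<longrightarrow> measure F {\<phi>. \<beta> \<phi> = Some q} = measure G {\<psi>. fst (\<sigma> \<psi>) = q})"

definition certifier_revenue :: "real measure \<Rightarrow> real \<Rightarrow> (real \<Rightarrow> real \<times> real) \<Rightarrow> real" where
  "certifier_revenue G c \<sigma> = (\<integral>\<psi>. snd (\<sigma> \<psi>) \<partial>G) - c * measure G {\<psi>. 0 < fst (\<sigma> \<psi>)}"

end

theory Submission
  imports Defs
begin

text \<open>Under strict single crossing both sides of the market sort assortatively: the quality
certified by a producer is nondecreasing in \<psi>, the quality bought by a consumer is
nondecreasing in \<phi>. Market clearing equates, for every positive offered quality x, the
G-mass of producers certifying at least x with the F-mass of consumers buying at least x. Since
\<phi> matches the quantiles of G and F, these upper sets correspond to each other under \<phi> up to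
G-null sets, so almost every producer \<psi> is matched with the consumer \<phi> \<psi>. Adding the
producer's and that consumer's optimality conditions cancels the price p and shows that \<psi>'s
certificate maximises f q (\<phi> \<psi>) - g q \<psi> - t over the menu. Changing the choice on a null
set gives an everywhere optimal buyer selection with the same revenue.\<close>

section \<open>Down- and up-closed sets of reals\<close>

lemma down_closed_cofinal_incseq:
  fixes D :: "real set"
  assumes ne: "D \<noteq> {}" and down: "\<And>x y. x \<in> D \<Longrightarrow> y \<le> x \<Longrightarrow> y \<in> D"
  shows "\<exists>a. incseq a \<and> (\<forall>n. a n \<in> D) \<and> (\<forall>x\<in>D. \<exists>n. x \<le> a n)"
proof (cases "bdd_above D")
  case False
  have "real n \<in> D" for n
  proof -
    have "\<not> (\<forall>x\<in>D. x \<le> real n)" using False by (meson bdd_above.I)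
    then obtain x where "x \<in> D" "real n \<le> x" by force
    then show ?thesis using down by blast
  qed
  moreover have "\<exists>n. x \<le> real n" for x
    using real_arch_simple by blast
  ultimately show ?thesis by (intro exI[of _ real]) (auto simp: incseq_def)
next
  case bdd: True
  show ?thesis
  proof (cases "Sup D \<in> D")
    case True
    then show ?thesis using bdd by (intro exI[of _ "\<lambda>_. Sup D"]) (auto intro: cSup_upper)
  next
    case False
    define a where "a n = Sup D - 1 / (real n + 1)" for n
    have "a n \<in> D" for n
    proof -
      have "a n < Sup D" unfolding a_def by simp
      then obtain x where "x \<in> D" "a n < x" using less_cSup_iff[OF ne bdd] by blast
      then show ?thesis using down by simp
    qed
    moreover have "\<exists>n. x \<le> a n" if x: "x \<in> D" for x
    proof -
      have "x \<le> Sup D" using x bdd by (rule cSup_upper)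
      then have "0 < Sup D - x" using x False by (cases "x = Sup D") auto
      then obtain n where "inverse (real (Suc n)) < Sup D - x"
        using reals_Archimedean by blast
      then have "x \<le> a n" unfolding a_def by (simp add: inverse_eq_divide add.commute)
      then show ?thesis by blast
    qed
    moreover have "incseq a" unfolding incseq_def a_def by (auto intro!: frac_le)
    ultimately show ?thesis by blast
  qed
qed

lemma down_closed_eq_Union_atMost:
  fixes D :: "real set"
  assumes ne: "D \<noteq> {}" and down: "\<And>x y. x \<in> D \<Longrightarrow> y \<le> x \<Longrightarrow> y \<in> D"
  obtains a where "incseq a" "\<And>n. a n \<in> D" "D = (\<Union>n. {..a n})"
proof -
  have "\<exists>a. incseq a \<and> (\<forall>n. a n \<in> D) \<and> (\<forall>x\<in>D. \<exists>n. x \<le> a n)"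
    by (rule down_closed_cofinal_incseq[OF ne]) (fact down)
  then obtain a where a: "incseq a" "\<And>n. a n \<in> D" and cofinal: "\<And>x. x \<in> D \<Longrightarrow> \<exists>n. x \<le> a n"
    by blast
  have "D = (\<Union>n. {..a n})"
  proof
    show "D \<subseteq> (\<Union>n. {..a n})" using cofinal by fastforce
    show "(\<Union>n. {..a n}) \<subseteq> D" using a(2) down by blast
  qed
  with a show thesis by (rule that)
qed

lemma up_closed_eq_Union_atLeast:
  fixes U :: "real set"
  assumes ne: "U \<noteq> {}" and up: "\<And>x y. x \<in> U \<Longrightarrow> x \<le> y \<Longrightarrow> y \<in> U"
  obtains a where "decseq a" "\<And>n. a n \<in> U" "U = (\<Union>n. {a n..})"
proof -
  let ?D = "{x. - x \<in> U}"
  have ne': "?D \<noteq> {}" using ne by (auto intro: exI[of _ "- x" for x])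
  have down: "y \<in> ?D" if "x \<in> ?D" "y \<le> x" for x y
    using that up[of "- x" "- y"] by simp
  show thesis
  proof (rule down_closed_eq_Union_atMost[OF ne' down])
    fix a assume a: "incseq a" "\<And>n. a n \<in> ?D" "?D = (\<Union>n. {..a n})"
    have "U = (\<Union>n. {- a n..})"
    proof (intro equalityI subsetI)
      fix x assume "x \<in> U"
      then have "- x \<in> (\<Union>n. {..a n})" using a(3) by auto
      then show "x \<in> (\<Union>n. {- a n..})" by (auto simp: minus_le_iff)
    next
      fix x assume "x \<in> (\<Union>n. {- a n..})"
      then obtain n where "- a n \<le> x" by auto
      then show "x \<in> U" using a(2)[of n] up by blast
    qed
    moreover have "decseq (\<lambda>n. - a n)" using a(1) by (simp add: incseq_def decseq_def)
    ultimately show thesis using a(2) by (intro that) auto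
  qed
qed

context finite_borel_measure
begin

lemma sets_down_closed:
  fixes D :: "real set"
  assumes "\<And>x y. x \<in> D \<Longrightarrow> y \<le> x \<Longrightarrow> y \<in> D"
  shows "D \<in> sets M"
  using assms by (intro sets_M real_interval_borel_measurable) (auto simp: is_interval_1)

lemma sets_up_closed:
  fixes U :: "real set"
  assumes "\<And>x y. x \<in> U \<Longrightarrow> x \<le> y \<Longrightarrow> y \<in> U"
  shows "U \<in> sets M"
  using assms by (intro sets_M real_interval_borel_measurable) (auto simp: is_interval_1)

lemma measure_down_closed_le:
  assumes down: "\<And>x y. x \<in> D \<Longrightarrow> y \<le> x \<Longrightarrow> y \<in> D"
    and bound: "\<And>x. x \<in> D \<Longrightarrow> cdf M x \<le> u" and "0 \<le> u"
  shows "measure M D \<le> u"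
proof (cases "D = {}")
  case False
  show ?thesis
  proof (rule down_closed_eq_Union_atMost[OF False down])
    fix a assume a: "incseq a" "\<And>n. a n \<in> D" "D = (\<Union>n. {..a n})"
    have "(\<lambda>n. cdf M (a n)) \<longlonglongrightarrow> measure M D"
      unfolding a(3) cdf_def using a(1) by (intro finite_Lim_measure_incseq) (auto simp: incseq_def)
    then show ?thesis by (rule LIMSEQ_le_const2) (use a(2) bound in auto)
  qed
qed (use \<open>0 \<le> u\<close> in simp)

lemma measure_up_closed_le:
  assumes up: "\<And>x y. x \<in> U \<Longrightarrow> x \<le> y \<Longrightarrow> y \<in> U"
    and bound: "\<And>x. x \<in> U \<Longrightarrow> measure M {x..} \<le> u" and "0 \<le> u"
  shows "measure M U \<le> u"
proof (cases "U = {}")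
  case False
  show ?thesis
  proof (rule up_closed_eq_Union_atLeast[OF False up])
    fix a assume a: "decseq a" "\<And>n. a n \<in> U" "U = (\<Union>n. {a n..})"
    have "(\<lambda>n. measure M {a n..}) \<longlonglongrightarrow> measure M U"
      unfolding a(3) using a(1) by (intro finite_Lim_measure_incseq) (auto simp: incseq_def decseq_def)
    then show ?thesis by (rule LIMSEQ_le_const2) (use a(2) bound in auto)
  qed
qed (use \<open>0 \<le> u\<close> in simp)

lemma null_sets_of_measure_diff_le_0:
  assumes "A \<in> sets M" "B \<in> sets M" "B \<subseteq> A" "measure M A \<le> measure M B"
  shows "A - B \<in> null_sets M"
proof -
  have "measure M (A - B) = 0"
    using assms finite_measure_Diff[of A B] measure_nonneg[of M "A - B"] by linarith
  then show ?thesis using assms by (auto simp: emeasure_eq_measure)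
qed

lemma null_sets_cdf_le_diff_down_closed:
  assumes down: "\<And>x y. x \<in> A \<Longrightarrow> y \<le> x \<Longrightarrow> y \<in> A"
  shows "{x. cdf M x \<le> measure M A} - A \<in> null_sets M"
proof (rule null_sets_of_measure_diff_le_0)
  let ?D = "{x. cdf M x \<le> measure M A}"
  have down_D: "y \<in> ?D" if "x \<in> ?D" "y \<le> x" for x y
    using that cdf_nondecreasing[of y x] by simp
  show "?D \<in> sets M" by (rule sets_down_closed[OF down_D])
  show "A \<in> sets M" by (rule sets_down_closed[OF down])
  show "A \<subseteq> ?D"
  proof
    fix x assume "x \<in> A"
    then have "{..x} \<subseteq> A" using down by auto
    then show "x \<in> ?D" unfolding cdf_def using \<open>A \<in> sets M\<close> by (auto intro: finite_measure_mono)
  qed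
  show "measure M ?D \<le> measure M A" by (rule measure_down_closed_le[OF down_D]) auto
qed

lemma null_sets_tail_le_diff_up_closed:
  assumes up: "\<And>x y. x \<in> A \<Longrightarrow> x \<le> y \<Longrightarrow> y \<in> A"
  shows "{x. measure M {x..} \<le> measure M A} - A \<in> null_sets M"
proof (rule null_sets_of_measure_diff_le_0)
  let ?U = "{x. measure M {x..} \<le> measure M A}"
  have up_U: "y \<in> ?U" if "x \<in> ?U" "x \<le> y" for x y
    using that finite_measure_mono[of "{y..}" "{x..}"] by fastforce
  show "?U \<in> sets M" by (rule sets_up_closed[OF up_U])
  show "A \<in> sets M" by (rule sets_up_closed[OF up])
  show "A \<subseteq> ?U"
  proof
    fix x assume "x \<in> A"
    then have "{x..} \<subseteq> A" using up by auto
    then show "x \<in> ?U" using \<open>A \<in> sets M\<close> by (auto intro: finite_measure_mono)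
  qed
  show "measure M ?U \<le> measure M A" by (rule measure_up_closed_le[OF up_U]) auto
qed

end

context real_distribution
begin

lemma measure_greaterThan_eq: "measure M {x<..} = 1 - cdf M x"
proof -
  have "{x<..} = space M - {..x}" by auto
  also have "measure M \<dots> = 1 - cdf M x" unfolding cdf_def by (rule prob_compl) simp
  finally show ?thesis .
qed

lemma measure_atLeast_eq:
  assumes "measure M {x} = 0"
  shows "measure M {x..} = 1 - cdf M x"
proof -
  have "{x..} = {x<..} \<union> {x}" by auto
  also have "measure M \<dots> = measure M {x<..} + measure M {x}"
    by (rule finite_measure_Union) auto
  finally show ?thesis using assms measure_greaterThan_eq by simp
qed

end

section \<open>Coupling two distributions by a quantile map\<close>

lemma AE_mem_up_closed_iff_quantile:
  fixes F G :: "real measure" and \<phi> :: "real \<Rightarrow> real" and U V :: "real set"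
  assumes F: "real_distribution F" and G: "real_distribution G"
    and atomless: "\<And>x. measure G {x} = 0"
    and quantile: "\<And>\<psi>. cdf F (\<phi> \<psi>) = cdf G \<psi>"
    and up_U: "\<And>x y. x \<in> U \<Longrightarrow> x \<le> y \<Longrightarrow> y \<in> U"
    and up_V: "\<And>x y. x \<in> V \<Longrightarrow> x \<le> y \<Longrightarrow> y \<in> V"
    and mass: "measure G U = measure F V"
  shows "AE \<psi> in G. \<psi> \<in> U \<longleftrightarrow> \<phi> \<psi> \<in> V"
proof -
  interpret F: real_distribution F by (rule F)
  interpret G: real_distribution G by (rule G)
  have V: "V \<in> sets F" by (rule F.sets_up_closed[OF up_V])
  have U: "U \<in> sets G" by (rule G.sets_up_closed[OF up_U])
  have down_cU: "y \<in> - U" if "x \<in> - U" "y \<le> x" for x y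
    using that up_U by blast
  let ?N1 = "{x. cdf G x \<le> measure G (- U)} - - U"
  let ?N2 = "{x. measure G {x..} \<le> measure G U} - U"
  have "?N1 \<in> null_sets G" by (rule G.null_sets_cdf_le_diff_down_closed) (fact down_cU)
  moreover have "?N2 \<in> null_sets G" by (rule G.null_sets_tail_le_diff_up_closed) (fact up_U)
  ultimately have "?N1 \<union> ?N2 \<in> null_sets G" by blast
  then show ?thesis
  proof (rule AE_I')
    show "{\<psi> \<in> space G. \<not> (\<psi> \<in> U \<longleftrightarrow> \<phi> \<psi> \<in> V)} \<subseteq> ?N1 \<union> ?N2"
    proof (rule subsetI)
      fix \<psi> assume "\<psi> \<in> {\<psi> \<in> space G. \<not> (\<psi> \<in> U \<longleftrightarrow> \<phi> \<psi> \<in> V)}"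
      then consider "\<psi> \<in> U" "\<phi> \<psi> \<notin> V" | "\<psi> \<notin> U" "\<phi> \<psi> \<in> V" by blast
      then show "\<psi> \<in> ?N1 \<union> ?N2"
      proof cases
        case 1
        then have "{..\<phi> \<psi>} \<subseteq> - V" using up_V by blast
        then have "cdf F (\<phi> \<psi>) \<le> measure F (- V)"
          unfolding cdf_def using V by (intro F.finite_measure_mono) auto
        also have "measure F (- V) = measure G (- U)"
          using F.prob_compl[OF V] G.prob_compl[OF U] mass by (simp add: Compl_eq_Diff_UNIV)
        finally show ?thesis using 1 quantile by simp
      next
        case 2
        then have "{\<phi> \<psi><..} \<subseteq> V" using up_V by auto
        then have "measure F {\<phi> \<psi><..} \<le> measure F V" using V by (intro F.finite_measure_mono) auto
        then have "measure G {\<psi>..} \<le> measure G U"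
          using G.measure_atLeast_eq[OF atomless] F.measure_greaterThan_eq quantile mass by simp
        then show ?thesis using 2 by simp
      qed
    qed
  qed
qed

section \<open>Strict single crossing\<close>

lemma strict_single_crossing_pref_between:
  assumes sc: "strict_single_crossing v" and q: "q \<in> {0..1}" "q' \<in> {0..1}"
    and x: "a \<le> x" "x \<le> b"
    and pref_a: "v q' a - t' \<le> v q a - t" and pref_b: "v q' b - t' \<le> v q b - t"
  shows "v q' x - t' \<le> v q x - t"
proof (cases q' q rule: linorder_cases)
  case less
  show ?thesis
  proof (cases "a = x")
    case False
    then have "v q x - v q' x > v q a - v q' a"
      using sc less q x unfolding strict_single_crossing_def by auto
    then show ?thesis using pref_a by linarith
  qed (use pref_a in simp)
next
  case greater
  show ?thesis
  proof (cases "x = b")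
    case False
    then have "v q' b - v q b > v q' x - v q x"
      using sc greater q x unfolding strict_single_crossing_def by auto
    then show ?thesis using pref_b by linarith
  qed (use pref_b in simp)
qed (use pref_a in simp)

lemma strict_single_crossing_choice_mono:
  assumes sc: "strict_single_crossing w" and "\<theta>1 < \<theta>2" "q1 \<in> {0..1}" "q2 \<in> {0..1}"
    and choice1: "w q2 \<theta>1 - t' \<le> w q1 \<theta>1 - t" and choice2: "w q1 \<theta>2 - t \<le> w q2 \<theta>2 - t'"
  shows "q1 \<le> q2"
proof (rule ccontr)
  assume "\<not> q1 \<le> q2"
  then have "w q1 \<theta>2 - w q2 \<theta>2 > w q1 \<theta>1 - w q2 \<theta>1"
    using sc assms(2-4) unfolding strict_single_crossing_def by auto
  then show False using choice1 choice2 by linarith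
qed

lemma strict_single_crossing_net_value:
  assumes f_sc: "strict_single_crossing f" and g_sc: "strict_single_crossing (\<lambda>q \<psi>. - g q \<psi>)"
    and \<phi>_mono: "mono \<phi>"
  shows "strict_single_crossing (\<lambda>q \<psi>. f q (\<phi> \<psi>) - g q \<psi>)"
  unfolding strict_single_crossing_def
proof (intro allI impI)
  fix \<psi>1 \<psi>2 q1 q2 :: real
  assume h: "\<psi>1 < \<psi>2" "0 \<le> q1" "q1 < q2" "q2 \<le> 1"
  have "g q2 \<psi>1 - g q1 \<psi>1 > g q2 \<psi>2 - g q1 \<psi>2"
    using g_sc h unfolding strict_single_crossing_def by fastforce
  moreover have "f q2 (\<phi> \<psi>2) - f q1 (\<phi> \<psi>2) \<ge> f q2 (\<phi> \<psi>1) - f q1 (\<phi> \<psi>1)"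
  proof (cases "\<phi> \<psi>1 = \<phi> \<psi>2")
    case False
    then have "\<phi> \<psi>1 < \<phi> \<psi>2" using \<phi>_mono h(1) by (simp add: monoD order_less_le)
    then show ?thesis using f_sc h(2-4) unfolding strict_single_crossing_def by fastforce
  qed simp
  ultimately show "f q2 (\<phi> \<psi>2) - g q2 \<psi>2 - (f q1 (\<phi> \<psi>2) - g q1 \<psi>2)
      > f q2 (\<phi> \<psi>1) - g q2 \<psi>1 - (f q1 (\<phi> \<psi>1) - g q1 \<psi>1)"
    by linarith
qed

section \<open>Choices and revenue in the pricing problem\<close>

lemma measurable_count_space_UNIV_finite_range:
  assumes "finite A" "\<And>x. h x \<in> A" "\<And>a. a \<in> A \<Longrightarrow> {x. h x = a} \<in> sets M"
    and "space M = UNIV"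
  shows "h \<in> M \<rightarrow>\<^sub>M count_space UNIV"
proof -
  have "h \<in> M \<rightarrow>\<^sub>M count_space A"
    using assms by (simp add: measurable_count_space_eq2 Pi_iff vimage_def)
  then show ?thesis by (rule measurable_compose) simp
qed

lemma sets_Collect_count_space_measurable:
  assumes "h \<in> M \<rightarrow>\<^sub>M count_space UNIV" "space M = UNIV"
  shows "{x. P (h x)} \<in> sets M"
  using predE[OF pred_sets2[OF _ assms(1), of "{a. P a}"]] assms(2) by simp

lemma buyer_best_exists:
  assumes "finite M" "M \<noteq> {}"
  shows "\<exists>m. buyer_best v M \<theta> m"
proof -
  define u where "u m = v (fst m) \<theta> - snd m" for m
  have "Max (u ` M) \<in> u ` M" using assms by simp
  then obtain m where m: "m \<in> M" "u m = Max (u ` M)" by auto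
  then have "\<forall>m'\<in>M. u m' \<le> u m" using assms(1) by simp
  then show ?thesis
    using m(1) unfolding buyer_best_def u_def[symmetric] by blast
qed

lemma buyer_best_sets:
  assumes sc: "strict_single_crossing v" and M: "menu M" and m: "m \<in> M"
  shows "{\<theta>. buyer_best v M \<theta> m} \<in> sets borel"
proof (rule real_interval_borel_measurable, unfold is_interval_1, intro ballI allI impI)
  fix a b x assume a: "a \<in> {\<theta>. buyer_best v M \<theta> m}" and b: "b \<in> {\<theta>. buyer_best v M \<theta> m}"
    and x: "a \<le> x \<and> x \<le> b"
  have q: "fst m' \<in> {0..1}" if "m' \<in> M" for m' using M that unfolding menu_def by auto
  show "x \<in> {\<theta>. buyer_best v M \<theta> m}"
    unfolding buyer_best_def
  proof (intro CollectI conjI ballI m)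
    fix m' assume m': "m' \<in> M"
    show "v (fst m') x - snd m' \<le> v (fst m) x - snd m"
      by (rule strict_single_crossing_pref_between[OF sc q[OF m] q[OF m'], of a x b])
         (use a b x m' in \<open>auto simp: buyer_best_def\<close>)
  qed
qed

lemma buyer_best_measurable_selection:
  fixes G :: "real measure"
  assumes sc: "strict_single_crossing v" and M: "menu M" and G: "sets G = sets borel"
  obtains s where "\<forall>\<theta>. buyer_best v M \<theta> (s \<theta>)" "s \<in> G \<rightarrow>\<^sub>M count_space UNIV"
proof -
  have space: "space G = UNIV" using sets_eq_imp_space_eq[OF G] by simp
  have finM: "finite M" and M_ne: "M \<noteq> {}" using M unfolding menu_def by auto
  have Best: "{\<theta>. buyer_best v M \<theta> m} \<in> sets G" if "m \<in> M" for m
    using buyer_best_sets[OF sc M that] G by simp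
  have Not_Best: "- {\<theta>. buyer_best v M \<theta> m} \<in> sets G" if "m \<in> M" for m
    using sets.compl_sets[OF Best[OF that]] space by (simp add: Compl_eq_Diff_UNIV)
  define B where "B \<theta> = {m \<in> M. buyer_best v M \<theta> m}" for \<theta>
  have "B \<in> G \<rightarrow>\<^sub>M count_space UNIV"
  proof (rule measurable_count_space_UNIV_finite_range[OF _ _ _ space])
    show "finite (Pow M)" "\<And>\<theta>. B \<theta> \<in> Pow M" using finM by (auto simp: B_def)
    fix S assume "S \<in> Pow M"
    then have "{\<theta>. B \<theta> = S} =
        (\<Inter>m\<in>M. if m \<in> S then {\<theta>. buyer_best v M \<theta> m} else - {\<theta>. buyer_best v M \<theta> m})"
      unfolding B_def by (auto split: if_splits)
    also have "\<dots> \<in> sets G"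
      using finM M_ne Best Not_Best by (intro sets.finite_INT) auto
    finally show "{\<theta>. B \<theta> = S} \<in> sets G" .
  qed
  then have "(\<lambda>\<theta>. SOME m. m \<in> B \<theta>) \<in> G \<rightarrow>\<^sub>M count_space UNIV"
    by (rule measurable_compose) simp
  moreover have "buyer_best v M \<theta> (SOME m. m \<in> B \<theta>)" for \<theta>
    using someI_ex[of "\<lambda>m. m \<in> B \<theta>"] buyer_best_exists[OF finM M_ne]
    unfolding B_def buyer_best_def by blast
  ultimately show thesis by (intro that) auto
qed

lemma buyer_best_selection_AE_eq:
  fixes G :: "real measure"
  assumes sc: "strict_single_crossing v" and M: "menu M" and G: "sets G = sets borel"
    and \<sigma>: "\<sigma> \<in> G \<rightarrow>\<^sub>M count_space UNIV" and best: "AE \<theta> in G. buyer_best v M \<theta> (\<sigma> \<theta>)"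
  obtains s where "\<forall>\<theta>. buyer_best v M \<theta> (s \<theta>)" "s \<in> G \<rightarrow>\<^sub>M count_space UNIV"
    "AE \<theta> in G. s \<theta> = \<sigma> \<theta>"
proof (rule buyer_best_measurable_selection[OF sc M G])
  fix s0 assume s0: "\<forall>\<theta>. buyer_best v M \<theta> (s0 \<theta>)" "s0 \<in> G \<rightarrow>\<^sub>M count_space UNIV"
  have space: "space G = UNIV" using sets_eq_imp_space_eq[OF G] by simp
  have "{\<theta>. buyer_best v M \<theta> (\<sigma> \<theta>)} = (\<Union>m\<in>M. {\<theta>. \<sigma> \<theta> = m} \<inter> {\<theta>. buyer_best v M \<theta> m})"
    unfolding buyer_best_def by auto
  also have "\<dots> \<in> sets G"
    using M buyer_best_sets[OF sc M] G sets_Collect_count_space_measurable[OF \<sigma> space]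
    unfolding menu_def by (intro sets.finite_UN) auto
  finally have "{\<theta> \<in> space G. buyer_best v M \<theta> (\<sigma> \<theta>)} \<in> sets G" by (simp add: space)
  then have "(\<lambda>\<theta>. if buyer_best v M \<theta> (\<sigma> \<theta>) then \<sigma> \<theta> else s0 \<theta>) \<in> G \<rightarrow>\<^sub>M count_space UNIV"
    by (rule measurable_If[OF \<sigma> s0(2)])
  moreover have "AE \<theta> in G. (if buyer_best v M \<theta> (\<sigma> \<theta>) then \<sigma> \<theta> else s0 \<theta>) = \<sigma> \<theta>"
    using best by eventually_elim simp
  ultimately show thesis
    using s0(1) by (intro that) auto
qed

lemma certifier_revenue_eq_seller_revenue:
  assumes \<sigma>: "\<sigma> \<in> G \<rightarrow>\<^sub>M count_space UNIV" and s: "s \<in> G \<rightarrow>\<^sub>M count_space UNIV"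
    and space: "space G = UNIV" and eq: "AE \<theta> in G. s \<theta> = \<sigma> \<theta>"
    and nonneg: "\<And>\<theta>. 0 \<le> fst (\<sigma> \<theta>)"
  shows "certifier_revenue G c \<sigma> = seller_revenue G c s"
proof -
  have "(\<integral>\<theta>. snd (\<sigma> \<theta>) \<partial>G) = (\<integral>\<theta>. snd (s \<theta>) \<partial>G)"
  proof (rule integral_cong_AE)
    show "(\<lambda>\<theta>. snd (\<sigma> \<theta>)) \<in> borel_measurable G" by (rule measurable_compose[OF \<sigma>]) simp
    show "(\<lambda>\<theta>. snd (s \<theta>)) \<in> borel_measurable G" by (rule measurable_compose[OF s]) simp
    show "AE \<theta> in G. snd (\<sigma> \<theta>) = snd (s \<theta>)" using eq by eventually_elim simp
  qed
  moreover have "measure G {\<theta>. 0 < fst (\<sigma> \<theta>)} = measure G {\<theta>. fst (s \<theta>) \<noteq> 0}"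
  proof (rule measure_eq_AE)
    show "AE \<theta> in G. (\<theta> \<in> {\<theta>. 0 < fst (\<sigma> \<theta>)}) = (\<theta> \<in> {\<theta>. fst (s \<theta>) \<noteq> 0})"
      using eq by eventually_elim (use nonneg in \<open>auto simp: less_le\<close>)
    show "{\<theta>. 0 < fst (\<sigma> \<theta>)} \<in> sets G"
      by (rule sets_Collect_count_space_measurable[OF \<sigma> space])
    show "{\<theta>. fst (s \<theta>) \<noteq> 0} \<in> sets G"
      by (rule sets_Collect_count_space_measurable[OF s space])
  qed
  ultimately show ?thesis unfolding certifier_revenue_def seller_revenue_def by simp
qed

section \<open>Equilibria of the certification market\<close>

text \<open>A consumer who buys nothing is recorded as buying quality 0; with f 0 \<phi> = 0 and p 0 = 0
this leaves every utility unchanged.\<close>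

definition bought_quality :: "(real \<Rightarrow> real option) \<Rightarrow> real \<Rightarrow> real" where
  "bought_quality \<beta> \<phi> = (case \<beta> \<phi> of None \<Rightarrow> 0 | Some q \<Rightarrow> q)"

lemma cert_equilibrium_measurable:
  assumes "menu M" and "cert_equilibrium F G f g M \<sigma> \<beta> p" and "space G = UNIV"
  shows "\<sigma> \<in> G \<rightarrow>\<^sub>M count_space UNIV"
  using assms unfolding menu_def cert_equilibrium_def
  by (intro measurable_count_space_UNIV_finite_range[of M]) auto

lemma cert_equilibrium_quality_range:
  assumes "menu M" and "cert_equilibrium F G f g M \<sigma> \<beta> p"
  shows "fst (\<sigma> \<psi>) \<in> fst ` M" and "bought_quality \<beta> \<phi> \<in> fst ` M"
proof -
  show "fst (\<sigma> \<psi>) \<in> fst ` M" using assms(2) unfolding cert_equilibrium_def by blast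
  have "(0, 0) \<in> M" "\<beta> \<phi> \<in> insert None (Some ` fst ` M)"
    using assms unfolding menu_def cert_equilibrium_def by blast+
  then show "bought_quality \<beta> \<phi> \<in> fst ` M"
    unfolding bought_quality_def by (force split: option.split)
qed

lemma cert_equilibrium_quality_bounds:
  assumes "menu M" and "cert_equilibrium F G f g M \<sigma> \<beta> p"
  shows "fst (\<sigma> \<psi>) \<in> {0..1}" and "bought_quality \<beta> \<phi> \<in> {0..1}"
  using cert_equilibrium_quality_range(1)[OF assms, of \<psi>]
    cert_equilibrium_quality_range(2)[OF assms, of \<phi>] assms(1)
  unfolding menu_def by auto

lemma cert_equilibrium_producer_optimal:
  assumes "cert_equilibrium F G f g M \<sigma> \<beta> p" and "m \<in> M"
  shows "p (fst m) - g (fst m) \<psi> - snd m \<le> p (fst (\<sigma> \<psi>)) - g (fst (\<sigma> \<psi>)) \<psi> - snd (\<sigma> \<psi>)"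
  using assms unfolding cert_equilibrium_def by blast

lemma cert_equilibrium_consumer_optimal:
  assumes "cert_equilibrium F G f g M \<sigma> \<beta> p" and f_zero: "\<And>\<phi>. f 0 \<phi> = 0" and "m \<in> M"
  shows "f (fst m) \<phi> - p (fst m) \<le> f (bought_quality \<beta> \<phi>) \<phi> - p (bought_quality \<beta> \<phi>)"
proof -
  have "consumer_util f p \<phi> (\<beta> \<phi>) = f (bought_quality \<beta> \<phi>) \<phi> - p (bought_quality \<beta> \<phi>)"
    using assms(1) f_zero unfolding cert_equilibrium_def consumer_util_def bought_quality_def
    by (simp split: option.split)
  then show ?thesis using assms(1,3) unfolding cert_equilibrium_def by metis
qed

lemma cert_equilibrium_producer_quality_mono:
  assumes M: "menu M" and eq: "cert_equilibrium F G f g M \<sigma> \<beta> p"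
    and g_sc: "strict_single_crossing (\<lambda>q \<psi>. - g q \<psi>)"
  shows "mono (\<lambda>\<psi>. fst (\<sigma> \<psi>))"
proof (rule monoI)
  fix \<psi>1 \<psi>2 :: real assume "\<psi>1 \<le> \<psi>2"
  have \<sigma>: "\<sigma> \<psi> \<in> M" for \<psi> using eq unfolding cert_equilibrium_def by blast
  show "fst (\<sigma> \<psi>1) \<le> fst (\<sigma> \<psi>2)"
  proof (cases "\<psi>1 = \<psi>2")
    case False
    with \<open>\<psi>1 \<le> \<psi>2\<close> have "\<psi>1 < \<psi>2" by simp
    moreover have "p (fst (\<sigma> \<psi>')) - g (fst (\<sigma> \<psi>')) \<psi> - snd (\<sigma> \<psi>')
        \<le> p (fst (\<sigma> \<psi>)) - g (fst (\<sigma> \<psi>)) \<psi> - snd (\<sigma> \<psi>)" for \<psi> \<psi>'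
      using cert_equilibrium_producer_optimal[OF eq \<sigma>] .
    ultimately show ?thesis
      by (intro strict_single_crossing_choice_mono[where t = "snd (\<sigma> \<psi>1) - p (fst (\<sigma> \<psi>1))"
            and t' = "snd (\<sigma> \<psi>2) - p (fst (\<sigma> \<psi>2))", OF g_sc _
            cert_equilibrium_quality_bounds(1)[OF M eq] cert_equilibrium_quality_bounds(1)[OF M eq]])
         (auto simp: algebra_simps)
  qed simp
qed

lemma cert_equilibrium_bought_quality_mono:
  assumes M: "menu M" and eq: "cert_equilibrium F G f g M \<sigma> \<beta> p"
    and f_zero: "\<And>\<phi>. f 0 \<phi> = 0" and f_sc: "strict_single_crossing f"
  shows "mono (bought_quality \<beta>)"
proof (rule monoI)
  fix \<phi>1 \<phi>2 :: real assume "\<phi>1 \<le> \<phi>2"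
  have optimal: "f q \<phi> - p q \<le> f (bought_quality \<beta> \<phi>) \<phi> - p (bought_quality \<beta> \<phi>)"
    if "q \<in> fst ` M" for q \<phi>
    using that cert_equilibrium_consumer_optimal[OF eq f_zero] by auto
  show "bought_quality \<beta> \<phi>1 \<le> bought_quality \<beta> \<phi>2"
  proof (cases "\<phi>1 = \<phi>2")
    case False
    with \<open>\<phi>1 \<le> \<phi>2\<close> have "\<phi>1 < \<phi>2" by simp
    then show ?thesis
      using optimal cert_equilibrium_quality_range(2)[OF M eq]
      by (intro strict_single_crossing_choice_mono[where t = "p (bought_quality \<beta> \<phi>1)"
            and t' = "p (bought_quality \<beta> \<phi>2)", OF f_sc _
            cert_equilibrium_quality_bounds(2)[OF M eq] cert_equilibrium_quality_bounds(2)[OF M eq]])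
         auto
  qed simp
qed

lemma cert_equilibrium_market_clearing:
  assumes "cert_equilibrium F G f g M \<sigma> \<beta> p" and "q \<in> fst ` M" and "0 < q"
  shows "measure G {\<psi>. fst (\<sigma> \<psi>) = q} = measure F {\<phi>. \<beta> \<phi> = Some q}"
  using assms unfolding cert_equilibrium_def by (metis (no_types, lifting))

lemma cert_equilibrium_upper_mass_eq:
  assumes F: "finite_measure F" and G: "finite_measure G" and space: "space G = UNIV"
    and M: "menu M" and eq: "cert_equilibrium F G f g M \<sigma> \<beta> p" and "0 < x"
  shows "measure G {\<psi>. x \<le> fst (\<sigma> \<psi>)} = measure F {\<phi>. x \<le> bought_quality \<beta> \<phi>}"
proof -
  define S where "S = {q \<in> fst ` M. x \<le> q}"
  have "finite S" using M unfolding S_def menu_def by simp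
  have S_pos: "0 < q" if "q \<in> S" for q using that \<open>0 < x\<close> unfolding S_def by simp
  have level_sets: "{\<psi>. fst (\<sigma> \<psi>) = q} \<in> sets G" for q
    using sets_Collect_count_space_measurable[OF cert_equilibrium_measurable[OF M eq space] space] .
  have "{\<psi>. x \<le> fst (\<sigma> \<psi>)} = (\<Union>q\<in>S. {\<psi>. fst (\<sigma> \<psi>) = q})"
    using cert_equilibrium_quality_range(1)[OF M eq] unfolding S_def by auto
  also have "measure G \<dots> = (\<Sum>q\<in>S. measure G {\<psi>. fst (\<sigma> \<psi>) = q})"
    using \<open>finite S\<close> level_sets
    by (intro finite_measure.finite_measure_finite_Union[OF G]) (auto simp: disjoint_family_on_def)
  also have "\<dots> = (\<Sum>q\<in>S. measure F {\<phi>. \<beta> \<phi> = Some q})"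
    using S_pos cert_equilibrium_market_clearing[OF eq] unfolding S_def by (intro sum.cong) auto
  also have "\<dots> = measure F (\<Union>q\<in>S. {\<phi>. \<beta> \<phi> = Some q})"
    using \<open>finite S\<close> eq unfolding cert_equilibrium_def
    by (intro finite_measure.finite_measure_finite_Union[OF F, symmetric])
       (auto simp: disjoint_family_on_def)
  also have "(\<Union>q\<in>S. {\<phi>. \<beta> \<phi> = Some q}) = {\<phi>. x \<le> bought_quality \<beta> \<phi>}"
  proof safe
    fix \<phi> q assume "q \<in> S" "\<beta> \<phi> = Some q"
    then show "x \<le> bought_quality \<beta> \<phi>" unfolding S_def bought_quality_def by auto
  next
    fix \<phi> assume "x \<le> bought_quality \<beta> \<phi>"
    moreover have "bought_quality \<beta> \<phi> \<in> fst ` M" by (rule cert_equilibrium_quality_range(2)[OF M eq])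
    moreover have "\<beta> \<phi> = Some (bought_quality \<beta> \<phi>)"
      using \<open>0 < x\<close> \<open>x \<le> bought_quality \<beta> \<phi>\<close> unfolding bought_quality_def
      by (auto split: option.split_asm)
    ultimately show "\<phi> \<in> (\<Union>q\<in>S. {\<phi>. \<beta> \<phi> = Some q})" unfolding S_def by auto
  qed
  finally show ?thesis .
qed

lemma eq_if_le_iff_on_positive:
  fixes a b :: real
  assumes "a \<in> Q" "b \<in> Q" "0 \<le> a" "0 \<le> b"
    and le_iff: "\<And>x. x \<in> Q \<Longrightarrow> 0 < x \<Longrightarrow> x \<le> a \<longleftrightarrow> x \<le> b"
  shows "a = b"
proof (rule antisym)
  show "a \<le> b" using le_iff[OF \<open>a \<in> Q\<close>] \<open>0 \<le> a\<close> \<open>0 \<le> b\<close> by (cases "a = 0") auto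
  show "b \<le> a" using le_iff[OF \<open>b \<in> Q\<close>] \<open>0 \<le> a\<close> \<open>0 \<le> b\<close> by (cases "b = 0") auto
qed

lemma cert_equilibrium_AE_assortative:
  fixes F G :: "real measure"
  assumes F: "real_distribution F" and G: "real_distribution G"
    and atomless: "\<And>x. measure G {x} = 0"
    and quantile: "\<And>\<psi>. cdf F (\<phi> \<psi>) = cdf G \<psi>"
    and f_zero: "\<And>\<phi>. f 0 \<phi> = 0" and f_sc: "strict_single_crossing f"
    and g_sc: "strict_single_crossing (\<lambda>q \<psi>. - g q \<psi>)"
    and M: "menu M" and eq: "cert_equilibrium F G f g M \<sigma> \<beta> p"
  shows "AE \<psi> in G. fst (\<sigma> \<psi>) = bought_quality \<beta> (\<phi> \<psi>)"
proof -
  interpret F: real_distribution F by (rule F)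
  interpret G: real_distribution G by (rule G)
  let ?Q = "{q \<in> fst ` M. 0 < q}"
  have "finite ?Q" using M unfolding menu_def by simp
  then have "AE \<psi> in G. \<forall>x\<in>?Q. x \<le> fst (\<sigma> \<psi>) \<longleftrightarrow> x \<le> bought_quality \<beta> (\<phi> \<psi>)"
  proof (rule AE_finite_allI)
    fix x assume "x \<in> ?Q"
    have "measure G {\<psi>. x \<le> fst (\<sigma> \<psi>)} = measure F {\<phi>. x \<le> bought_quality \<beta> \<phi>}"
      using \<open>x \<in> ?Q\<close> by (intro cert_equilibrium_upper_mass_eq[OF F.finite_measure G.finite_measure _ M eq]) auto
    then have "AE \<psi> in G. \<psi> \<in> {\<psi>. x \<le> fst (\<sigma> \<psi>)} \<longleftrightarrow> \<phi> \<psi> \<in> {\<phi>. x \<le> bought_quality \<beta> \<phi>}"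
      using cert_equilibrium_producer_quality_mono[OF M eq g_sc]
        cert_equilibrium_bought_quality_mono[OF M eq f_zero f_sc]
      by (intro AE_mem_up_closed_iff_quantile[OF F G atomless quantile])
         (auto intro: order_trans dest: monoD)
    then show "AE \<psi> in G. x \<le> fst (\<sigma> \<psi>) \<longleftrightarrow> x \<le> bought_quality \<beta> (\<phi> \<psi>)" by simp
  qed
  then show ?thesis
  proof eventually_elim
    case (elim \<psi>)
    show ?case
      using cert_equilibrium_quality_range[OF M eq] cert_equilibrium_quality_bounds[OF M eq] elim
      by (intro eq_if_le_iff_on_positive[of _ "fst ` M"]) auto
  qed
qed

lemma cert_equilibrium_AE_buyer_best:
  fixes F G :: "real measure"
  assumes F: "real_distribution F" and G: "real_distribution G"
    and atomless: "\<And>x. measure G {x} = 0"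
    and quantile: "\<And>\<psi>. cdf F (\<phi> \<psi>) = cdf G \<psi>"
    and f_zero: "\<And>\<phi>. f 0 \<phi> = 0" and f_sc: "strict_single_crossing f"
    and g_sc: "strict_single_crossing (\<lambda>q \<psi>. - g q \<psi>)"
    and M: "menu M" and eq: "cert_equilibrium F G f g M \<sigma> \<beta> p"
  shows "AE \<psi> in G. buyer_best (\<lambda>q \<psi>. f q (\<phi> \<psi>) - g q \<psi>) M \<psi> (\<sigma> \<psi>)"
  using cert_equilibrium_AE_assortative[OF assms]
proof eventually_elim
  case (elim \<psi>)
  have "\<sigma> \<psi> \<in> M" using eq unfolding cert_equilibrium_def by blast
  moreover have "f (fst m) (\<phi> \<psi>) - g (fst m) \<psi> - snd m
      \<le> f (fst (\<sigma> \<psi>)) (\<phi> \<psi>) - g (fst (\<sigma> \<psi>)) \<psi> - snd (\<sigma> \<psi>)" if "m \<in> M" for m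
    using cert_equilibrium_consumer_optimal[OF eq f_zero that, of "\<phi> \<psi>"]
      cert_equilibrium_producer_optimal[OF eq that, of \<psi>] elim
    by simp
  ultimately show ?case unfolding buyer_best_def by simp
qed

lemma type_distribution_real_distribution: "type_distribution D \<Longrightarrow> real_distribution D"
  unfolding type_distribution_def real_distribution_def real_distribution_axioms_def by simp

lemma type_distribution_atomless: "type_distribution D \<Longrightarrow> measure D {x} = 0"
  unfolding type_distribution_def by simp

lemma cert_equilibrium_pricing_equivalence:
  fixes F G :: "real measure"
  assumes F: "real_distribution F" and G: "real_distribution G"
    and atomless: "\<And>x. measure G {x} = 0"
    and quantile: "\<And>\<psi>. cdf F (\<phi> \<psi>) = cdf G \<psi>" and \<phi>_mono: "mono \<phi>"
    and f_zero: "\<And>\<phi>. f 0 \<phi> = 0" and f_sc: "strict_single_crossing f"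
    and g_sc: "strict_single_crossing (\<lambda>q \<psi>. - g q \<psi>)"
    and M: "menu M" and eq: "cert_equilibrium F G f g M \<sigma> \<beta> p"
  defines "v \<equiv> \<lambda>q \<psi>. f q (\<phi> \<psi>) - g q \<psi>"
  shows "(AE \<psi> in G. buyer_best v M \<psi> (\<sigma> \<psi>))
    \<and> (\<exists>s. (\<forall>\<psi>. buyer_best v M \<psi> (s \<psi>)) \<and> (\<forall>m\<in>M. {\<psi>. s \<psi> = m} \<in> sets G)
          \<and> (AE \<psi> in G. s \<psi> = \<sigma> \<psi>) \<and> certifier_revenue G c \<sigma> = seller_revenue G c s)"
proof -
  interpret G: real_distribution G by (rule G)
  have v_sc: "strict_single_crossing v"
    unfolding v_def by (rule strict_single_crossing_net_value[OF f_sc g_sc \<phi>_mono])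
  have best: "AE \<psi> in G. buyer_best v M \<psi> (\<sigma> \<psi>)"
    unfolding v_def
    by (rule cert_equilibrium_AE_buyer_best[OF F G atomless quantile f_zero f_sc g_sc M eq])
  have \<sigma>: "\<sigma> \<in> G \<rightarrow>\<^sub>M count_space UNIV" by (rule cert_equilibrium_measurable[OF M eq G.space_eq_univ])
  obtain s where s: "\<forall>\<psi>. buyer_best v M \<psi> (s \<psi>)" "s \<in> G \<rightarrow>\<^sub>M count_space UNIV"
    "AE \<psi> in G. s \<psi> = \<sigma> \<psi>"
    by (rule buyer_best_selection_AE_eq[OF v_sc M G.events_eq_borel \<sigma> best])
  have "certifier_revenue G c \<sigma> = seller_revenue G c s"
    using cert_equilibrium_quality_bounds(1)[OF M eq]
    by (intro certifier_revenue_eq_seller_revenue[OF \<sigma> s(2) G.space_eq_univ s(3)]) simp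
  moreover have "{\<psi>. s \<psi> = m} \<in> sets G" for m
    by (rule sets_Collect_count_space_measurable[OF s(2) G.space_eq_univ])
  ultimately show ?thesis using best s(1,3) by blast
qed

theorem proposition1:
  fixes F G :: "real measure" and f g :: "real \<Rightarrow> real \<Rightarrow> real"
    and \<phi> :: "real \<Rightarrow> real" and c :: real
  assumes F: "type_distribution F" and G: "type_distribution G"
    and f_concave: "\<And>\<phi>'. concave_on {0..1} (\<lambda>q. f q \<phi>')"
    and f_mono: "\<And>\<phi>'. mono_on {0..1} (\<lambda>q. f q \<phi>')"
    and f_zero: "\<And>\<phi>'. f 0 \<phi>' = 0"
    and f_bounds: "\<And>q \<phi>'. q \<in> {0..1} \<Longrightarrow> 0 \<le> f q \<phi>' \<and> f q \<phi>' \<le> 1"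
    and f_sc: "strict_single_crossing f"
    and g_convex: "\<And>\<psi>. convex_on {0..1} (\<lambda>q. g q \<psi>)"
    and g_mono: "\<And>\<psi>. mono_on {0..1} (\<lambda>q. g q \<psi>)"
    and g_zero: "\<And>\<psi>. g 0 \<psi> = 0"
    and g_sc: "strict_single_crossing (\<lambda>q \<psi>. - g q \<psi>)"
    and c_nonneg: "0 \<le> c"
    and \<phi>_quantile: "\<And>\<psi>. cdf F (\<phi> \<psi>) = cdf G \<psi>"
    and \<phi>_mono: "mono \<phi>"
  defines "v \<equiv> (\<lambda>q \<psi>. f q (\<phi> \<psi>) - g q \<psi>)"
  shows "(\<forall>\<psi>. concave_on {0..1} (\<lambda>q. v q \<psi>))
       \<and> (\<forall>\<psi>. v 0 \<psi> = 0)
       \<and> strict_single_crossing v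
       \<and> (\<forall>M \<sigma> \<beta> p. menu M \<longrightarrow> cert_equilibrium F G f g M \<sigma> \<beta> p \<longrightarrow>
            (AE \<psi> in G. buyer_best v M \<psi> (\<sigma> \<psi>))
          \<and> (\<exists>s. (\<forall>\<psi>. buyer_best v M \<psi> (s \<psi>))
                \<and> (\<forall>m\<in>M. {\<psi>. s \<psi> = m} \<in> sets G)
                \<and> (AE \<psi> in G. s \<psi> = \<sigma> \<psi>)
                \<and> certifier_revenue G c \<sigma> = seller_revenue G c s))"
proof -
  have "concave_on {0..1} (\<lambda>q. v q \<psi>)" for \<psi>
    unfolding v_def by (rule concave_on_diff[OF f_concave g_convex])
  moreover have "v 0 \<psi> = 0" for \<psi> by (simp add: v_def f_zero g_zero)
  moreover have "strict_single_crossing v"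
    unfolding v_def by (rule strict_single_crossing_net_value[OF f_sc g_sc \<phi>_mono])
  moreover have "(AE \<psi> in G. buyer_best v M \<psi> (\<sigma> \<psi>))
      \<and> (\<exists>s. (\<forall>\<psi>. buyer_best v M \<psi> (s \<psi>)) \<and> (\<forall>m\<in>M. {\<psi>. s \<psi> = m} \<in> sets G)
            \<and> (AE \<psi> in G. s \<psi> = \<sigma> \<psi>) \<and> certifier_revenue G c \<sigma> = seller_revenue G c s)"
    if "menu M" and "cert_equilibrium F G f g M \<sigma> \<beta> p" for M \<sigma> \<beta> p
    unfolding v_def
    by (rule cert_equilibrium_pricing_equivalence[OF type_distribution_real_distribution[OF F]
          type_distribution_real_distribution[OF G] type_distribution_atomless[OF G]
          \<phi>_quantile \<phi>_mono f_zero f_sc g_sc that])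
  ultimately show ?thesis by blast
qed

end
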